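(* Let $(P_n)_{n\in\mathbb{Z}}$ be the Padovan sequence. For every $a\in\mathbb{Z}$ let $\rho_a=3P_{a-2}-P_{a-4}$ and $\sigma_a=-\rho_{-a}$. Then for all integers $a,n$ with $a<n$, $$P_n=\rho_a P_{n-a}+\sigma_a P_{n-2a}+P_{n-3a}.$$
   Context: The Padovan sequence is defined by $P_0=P_1=P_2=1$ and $P_{n+3}=P_{n+1}+P_n$, extended to negative indices via $P_n=P_{n+3}-P_{n+1}$. *)

theory Defs
  imports Main
begin

function padovan :: "int \<Rightarrow> int" where
  "padovan n = (if n = 0 \<or> n = 1 \<or> n = 2 then 1
                else if n \<ge> 3 then padovan (n - 2) + padovan (n - 3)
                else padovan (n + 3) - padovan (n + 1))"
  by auto
termination
  by (relation "measure (\<lambda>n. if n \<ge> 0 then nat n else nat (3 - 2 * n))") auto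

declare padovan.simps [simp del]

definition rho :: "int \<Rightarrow> int" where
  "rho a = 3 * padovan (a - 2) - padovan (a - 4)"

definition sigma :: "int \<Rightarrow> int" where
  "sigma a = - rho (- a)"

end

theory Submission
  imports Defs
begin

text \<open>Shifting by \<open>a\<close> is linear on the three-dimensional solution space of the recurrence:
  it maps the triple \<open>(P x, P (x+1), P (x+2))\<close> to \<open>(P (x+a), P (x+a+1), P (x+a+2))\<close> by a
  matrix \<open>M\<close> whose entries are Padovan numbers. The identity is the first coordinate of the
  Cayley-Hamilton relation \<open>M\<^sup>3 = tr M \<cdot> M\<^sup>2 - e M + det M\<close>, applied to the triple at
  \<open>n - 3a\<close>. Here \<open>tr M = \<rho>\<^sub>a\<close>; \<open>det M = 1\<close> because the
  determinant is unchanged when \<open>a\<close> increases by one; and the sum \<open>e\<close> of principal \<open>2\<times>2\<close>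
  minors equals \<open>\<rho>\<^sub>-\<^sub>a\<close>, since both sides satisfy the Padovan recurrence in \<open>-a\<close>.\<close>

lemma padovan_rec: "padovan (k + 3) = padovan (k + 1) + padovan k"
proof -
  consider "k \<ge> 0" | "k \<in> {-3, -2, -1}" | "k < -3" by force
  then show ?thesis
  proof cases
    case 1
    then show ?thesis by (subst padovan.simps) (simp add: add.commute)
  next
    case 2
    then show ?thesis by (auto simp: padovan.simps)
  next
    case 3
    then have "padovan k = padovan (k + 3) - padovan (k + 1)"
      by (subst padovan.simps) simp
    then show ?thesis by simp
  qed
qed

lemma padovan_values:
  "padovan 0 = 1" "padovan 1 = 1" "padovan 2 = 1" "padovan (-1) = 0" "padovan (-2) = 1"
  "padovan (-3) = 0" "padovan (-4) = 0" "padovan (-5) = 1" "padovan (-6) = -1" "padovan (-7) = 1"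
  by (simp_all add: padovan.simps)

lemma int_recurrence_unique:
  fixes f g :: "int \<Rightarrow> 'a::ab_group_add"
  assumes f: "\<And>k. f (k + 3) = f (k + 1) + f k" and g: "\<And>k. g (k + 3) = g (k + 1) + g k"
    and init: "f 0 = g 0" "f 1 = g 1" "f 2 = g 2"
  shows "f k = g k"
proof -
  define h where "h k = f k - g k" for k
  have h: "h (k + 3) = h (k + 1) + h k" for k
    unfolding h_def f g by (simp add: algebra_simps)
  have up: "h (int j) = 0 \<and> h (int j + 1) = 0 \<and> h (int j + 2) = 0" for j
  proof (induction j)
    case 0
    then show ?case using init by (simp add: h_def)
  next
    case (Suc j)
    then have "h (int j + 3) = 0" using h[of "int j"] by simp
    then show ?case using Suc by (simp add: add.commute add.left_commute)
  qed
  have down: "h (- int j) = 0 \<and> h (- int j + 1) = 0 \<and> h (- int j + 2) = 0" for j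
  proof (induction j)
    case 0
    then show ?case using init by (simp add: h_def)
  next
    case (Suc j)
    then have "h (-1 - int j) = 0" using h[of "-1 - int j"] by (simp add: algebra_simps)
    then show ?case using Suc by (simp add: algebra_simps)
  qed
  have "h k = 0"
    using up[of "nat k"] down[of "nat (- k)"] by (cases "k \<ge> 0") simp_all
  then show ?thesis by (simp add: h_def)
qed

lemma padovan_add:
  "padovan (x + a) = padovan (a - 5) * padovan x + padovan (a - 3) * padovan (x + 1)
     + padovan (a - 4) * padovan (x + 2)"
proof (rule int_recurrence_unique[where f = "\<lambda>a. padovan (x + a)"])
  fix k
  show "padovan (x + (k + 3)) = padovan (x + (k + 1)) + padovan (x + k)"
    using padovan_rec[of "x + k"] by (simp add: algebra_simps)
  have "padovan (k + 3 - j) = padovan (k + 1 - j) + padovan (k - j)" for j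
    using padovan_rec[of "k - j"] by (simp add: algebra_simps)
  from this[of 3] this[of 4] this[of 5] show "padovan (k + 3 - 5) * padovan x + padovan (k + 3 - 3) * padovan (x + 1)
      + padovan (k + 3 - 4) * padovan (x + 2)
    = padovan (k + 1 - 5) * padovan x + padovan (k + 1 - 3) * padovan (x + 1)
      + padovan (k + 1 - 4) * padovan (x + 2)
      + (padovan (k - 5) * padovan x + padovan (k - 3) * padovan (x + 1)
      + padovan (k - 4) * padovan (x + 2))"
    by (simp add: algebra_simps)
qed (simp_all add: padovan_values)

definition padovan_triple :: "int \<Rightarrow> int \<times> int \<times> int" where
  "padovan_triple x = (padovan x, padovan (x + 1), padovan (x + 2))"

text \<open>The matrix with rows \<open>(u, v, w)\<close>, \<open>(w, u+w, v)\<close>, \<open>(v, v+w, u+w)\<close>; its first row is the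
  addition formula, the other two are that formula at \<open>x+1\<close>, \<open>x+2\<close> rewritten by the recurrence.
  \<open>shift_det\<close> and \<open>shift_minors\<close> are its determinant and its sum of principal \<open>2\<times>2\<close> minors.\<close>

definition shift_map :: "int \<Rightarrow> int \<Rightarrow> int \<Rightarrow> int \<times> int \<times> int \<Rightarrow> int \<times> int \<times> int" where
  "shift_map u v w = (\<lambda>(x0, x1, x2).
     (u * x0 + v * x1 + w * x2, w * x0 + (u + w) * x1 + v * x2, v * x0 + (v + w) * x1 + (u + w) * x2))"

definition shift_det :: "int \<Rightarrow> int \<Rightarrow> int \<Rightarrow> int" where
  "shift_det u v w = u * ((u + w) * (u + w) - v * (v + w)) - v * (w * (u + w) - v * v)
     + w * (w * (v + w) - (u + w) * v)"

definition shift_minors :: "int \<Rightarrow> int \<Rightarrow> int \<Rightarrow> int" where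
  "shift_minors u v w = (u * (u + w) - v * w) + (u * (u + w) - w * v)
     + ((u + w) * (u + w) - v * (v + w))"

lemma shift_map_cayley_hamilton:
  "fst (shift_map u v w (shift_map u v w (shift_map u v w p)))
   = (3 * u + 2 * w) * fst (shift_map u v w (shift_map u v w p))
     - shift_minors u v w * fst (shift_map u v w p) + shift_det u v w * fst p"
  by (cases p) (simp add: shift_map_def shift_minors_def shift_det_def algebra_simps)

lemma padovan_triple_add:
  "shift_map (padovan (a - 5)) (padovan (a - 3)) (padovan (a - 4)) (padovan_triple x)
   = padovan_triple (x + a)"
proof -
  have "padovan (x + 1 + 2) = padovan (x + 1) + padovan x"
       "padovan (x + 2 + 1) = padovan (x + 1) + padovan x"
       "padovan (x + 2 + 2) = padovan (x + 2) + padovan (x + 1)"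
    using padovan_rec[of x] padovan_rec[of "x + 1"] by (simp_all add: add.assoc)
  then show ?thesis
    using padovan_add[of x a] padovan_add[of "x + 1" a] padovan_add[of "x + 2" a]
    by (simp add: padovan_triple_def shift_map_def algebra_simps)
qed

lemma shift_det_padovan: "shift_det (padovan (a - 5)) (padovan (a - 3)) (padovan (a - 4)) = 1"
proof -
  define D where "D a = shift_det (padovan (a - 5)) (padovan (a - 3)) (padovan (a - 4))" for a
  have step: "D (i + 1) = D i" for i
  proof -
    have "padovan (i - 2) = padovan (i - 5) + padovan (i - 4)"
      using padovan_rec[of "i - 5"] by simp
    then show ?thesis by (simp add: D_def shift_det_def algebra_simps)
  qed
  have "D a = D 0"
  proof (induction a rule: int_induct[where k = 0])
    case (step2 i)
    then show ?case using step[of "i - 1"] by simp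
  qed (simp_all add: step)
  then show ?thesis by (simp add: D_def shift_det_def padovan_values)
qed

lemma rho_rec: "rho (k + 3) = rho (k + 1) + rho k"
  using padovan_rec[of "k - 2"] padovan_rec[of "k - 4"] by (simp add: rho_def algebra_simps)

lemma shift_minors_padovan:
  "shift_minors (padovan (a - 5)) (padovan (a - 3)) (padovan (a - 4)) = rho (- a)"
proof -
  define E where "E k = shift_minors (padovan (- k - 5)) (padovan (- k - 3)) (padovan (- k - 4))" for k
  have E_rec: "E (k + 3) = E (k + 1) + E k" for k
  proof -
    have "padovan (- k - 3) = padovan (- k - 5) + padovan (- k - 6)"
         "padovan (- k - 4) = padovan (- k - 6) + padovan (- k - 7)"
         "padovan (- k - 5) = padovan (- k - 7) + padovan (- k - 8)"
      using padovan_rec[of "- k - 6"] padovan_rec[of "- k - 7"] padovan_rec[of "- k - 8"]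
      by (simp_all add: algebra_simps)
    then show ?thesis by (simp add: E_def shift_minors_def algebra_simps)
  qed
  have "E k = rho k" for k
    by (rule int_recurrence_unique[OF E_rec rho_rec])
       (simp_all add: E_def shift_minors_def rho_def padovan_values)
  from this[of "- a"] show ?thesis by (simp add: E_def)
qed

theorem theorem3p1:
  fixes a n :: int
  assumes "a < n"
  shows "padovan n = rho a * padovan (n - a) + sigma a * padovan (n - 2 * a) + padovan (n - 3 * a)"
proof -
  define M where "M = shift_map (padovan (a - 5)) (padovan (a - 3)) (padovan (a - 4))"
  define p where "p = padovan_triple (n - 3 * a)"
  have shifts: "M p = padovan_triple (n - 2 * a)" "M (padovan_triple (n - 2 * a)) = padovan_triple (n - a)"
    "M (padovan_triple (n - a)) = padovan_triple n"
    by (simp_all add: M_def p_def padovan_triple_add algebra_simps)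
  have trace: "3 * padovan (a - 5) + 2 * padovan (a - 4) = rho a"
    using padovan_rec[of "a - 5"] by (simp add: rho_def)
  have "fst (M (M (M p))) = rho a * fst (M (M p)) + sigma a * fst (M p) + fst p"
    using shift_map_cayley_hamilton[of "padovan (a - 5)" "padovan (a - 3)" "padovan (a - 4)" p]
    unfolding M_def[symmetric] trace shift_minors_padovan shift_det_padovan
    by (simp add: sigma_def)
  then show ?thesis
    by (simp only: shifts) (simp add: padovan_triple_def p_def)
qed

end
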